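(* Let $H=E+D$ and $K=E'+D'$ be closed additive subgroups of $\mathbb{R}^{n}$ (with decompositions as in the context) and let $f:H\to K$ be a homomorphism of closed additive groups. Then: (i) if $f$ is injective, $|\widetilde{\mathrm{dim}}(H)|\leq|\widetilde{\mathrm{dim}}(K)|$; (ii) if $f$ is surjective, $|\widetilde{\mathrm{dim}}(H)|\geq|\widetilde{\mathrm{dim}}(K)|$; (iii) if $f$ is invertible, $\widetilde{\mathrm{dim}}(H)=\widetilde{\mathrm{dim}}(K)$; (iv) $f(H)$ is a closed additive subgroup of $K$; (v) for every closed subgroup $L$ of $K$, $f^{-1}(L)$ is a closed additive subgroup of $H$.
   Context: Every closed additive subgroup $H$ of $\mathbb{R}^n$ can be written $H=E+D$ with $E$ a vector subspace and $D$ a discrete additive subgroup with $E\cap\mathrm{vect}(D)=\{0\}$ ($\mathrm{vect}$ = real span); such decompositions $H=E+D$, $K=E'+D'$ are fixed. A map $f:H\to K$ is a homomorphism of closed additive groups if $f=f_1\oplus f_2$ with $f_1:E\to E'$ linear and $f_2:D\to D'$ a group homomorphism, i.e. $f(\lambda x+ py)=\lambda f_1(x)+pf_2(y)$ for all $\lambda\in\mathbb{R}$, $p\in\mathbb{Z}$, $x\in E$, $y\in D$. It is an isomorphism of closed additive groups if it is invertible. For an additive subgroup $G$, $\widetilde{\mathrm{dim}}(G):=p+i(q-p)$ where $p=\max\{\dim V: V\text{ a vector subspace},\ V\subset G\}$, $q=\dim\mathrm{vect}(G)$; $|\cdot|$ is the complex modulus. *)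

theory Defs
  imports "HOL-Analysis.Analysis"
begin

definition additive_subgroup :: "'a::real_vector set \<Rightarrow> bool" where
  "additive_subgroup G \<longleftrightarrow> 0 \<in> G \<and> (\<forall>x\<in>G. \<forall>y\<in>G. x + y \<in> G) \<and> (\<forall>x\<in>G. - x \<in> G)"

definition closed_additive_subgroup :: "'a::real_normed_vector set \<Rightarrow> bool" where
  "closed_additive_subgroup G \<longleftrightarrow> closed G \<and> additive_subgroup G"

definition closed_group_decomp :: "'a::euclidean_space set \<Rightarrow> 'a set \<Rightarrow> 'a set \<Rightarrow> bool" where
  "closed_group_decomp H E D \<longleftrightarrow>
     subspace E \<and> additive_subgroup D \<and> discrete D \<and> E \<inter> span D = {0} \<and>
     H = {x + y | x y. x \<in> E \<and> y \<in> D}"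

definition closed_group_hom ::
  "'a::euclidean_space set \<Rightarrow> 'a set \<Rightarrow> 'a set \<Rightarrow> 'a set \<Rightarrow> ('a \<Rightarrow> 'a) \<Rightarrow> bool" where
  "closed_group_hom E D E' D' f \<longleftrightarrow>
     (\<exists>f1 f2.
        f1 ` E \<subseteq> E' \<and>
        (\<forall>x\<in>E. \<forall>y\<in>E. f1 (x + y) = f1 x + f1 y) \<and>
        (\<forall>c. \<forall>x\<in>E. f1 (c *\<^sub>R x) = c *\<^sub>R f1 x) \<and>
        f2 ` D \<subseteq> D' \<and>
        (\<forall>x\<in>D. \<forall>y\<in>D. f2 (x + y) = f2 x + f2 y) \<and>
        (\<forall>x\<in>E. \<forall>y\<in>D. f (x + y) = f1 x + f2 y))"

definition tdim :: "'a::euclidean_space set \<Rightarrow> complex" where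
  "tdim G = (let p = Max {dim V | V. subspace V \<and> V \<subseteq> G};
                 q = dim (span G)
             in Complex (real p) (real q - real p))"

end

theory Submission
  imports Defs
begin

text \<open>For \<open>H = E + D\<close>, no subspace inside \<open>H\<close> can have a nonzero \<open>D\<close>-component, because
  scaling it would produce arbitrarily short nonzero elements of the discrete group \<open>D\<close>; hence
  \<open>tdim H = dim E + i dim D\<close>. Integrally independent vectors of a discrete group are linearly
  independent, so injectivity (surjectivity) of \<open>f\<close> bounds both ranks from below (above),
  which gives (i)--(iii). For (iv) and (v): if \<open>a\<^sub>n + b\<^sub>n\<close> converges with \<open>a\<^sub>n\<close> in a subspace
  and \<open>b\<^sub>n\<close> in a discrete set spanning a transversal subspace, then \<open>b\<^sub>n\<close> is eventually
  constant. This makes \<open>f(H) = f\<^sub>1(E) + f\<^sub>2(D)\<close> closed and \<open>f\<close> continuous on \<open>H\<close>.\<close>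

lemma additive_subgroup_0: "additive_subgroup D \<Longrightarrow> 0 \<in> D"
  and additive_subgroup_add: "additive_subgroup D \<Longrightarrow> x \<in> D \<Longrightarrow> y \<in> D \<Longrightarrow> x + y \<in> D"
  and additive_subgroup_minus: "additive_subgroup D \<Longrightarrow> x \<in> D \<Longrightarrow> - x \<in> D"
  by (simp_all add: additive_subgroup_def)

lemma additive_subgroup_diff: "additive_subgroup D \<Longrightarrow> x \<in> D \<Longrightarrow> y \<in> D \<Longrightarrow> x - y \<in> D"
  using additive_subgroup_add additive_subgroup_minus by (metis uminus_add_conv_diff)

lemma additive_subgroup_scaleR_of_int:
  assumes "additive_subgroup D" "x \<in> D"
  shows "of_int k *\<^sub>R x \<in> D"
proof -
  have nat: "of_nat n *\<^sub>R x \<in> D" for n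
    by (induction n) (auto simp: algebra_simps assms additive_subgroup_0 additive_subgroup_add)
  show ?thesis
    by (cases k rule: int_cases2) (simp_all add: nat additive_subgroup_minus[OF assms(1)])
qed

lemma additive_subgroup_int_combination:
  assumes "additive_subgroup D" "v ` S \<subseteq> D"
  shows "(\<Sum>i\<in>S. of_int (k i) *\<^sub>R v i) \<in> D"
  using assms(2)
  by (induction S rule: infinite_finite_induct)
     (auto simp: assms(1) additive_subgroup_0 additive_subgroup_add additive_subgroup_scaleR_of_int)

definition additive_on :: "'a::ab_group_add set \<Rightarrow> ('a \<Rightarrow> 'b::ab_group_add) \<Rightarrow> bool" where
  "additive_on D g \<longleftrightarrow> (\<forall>x\<in>D. \<forall>y\<in>D. g (x + y) = g x + g y)"

context
  fixes D :: "'a::real_vector set" and g :: "'a \<Rightarrow> 'b::real_vector"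
  assumes D: "additive_subgroup D" and g: "additive_on D g"
begin

lemma additive_on_0: "g 0 = 0"
  using g additive_subgroup_0[OF D] unfolding additive_on_def by (metis add_cancel_right_right)

lemma additive_on_minus: "x \<in> D \<Longrightarrow> g (- x) = - g x"
  using g additive_subgroup_minus[OF D] additive_on_0 unfolding additive_on_def
  by (metis add.right_inverse add_eq_0_iff)

lemma additive_on_scaleR_of_int:
  assumes "x \<in> D"
  shows "g (of_int k *\<^sub>R x) = of_int k *\<^sub>R g x"
proof -
  have nat: "g (of_nat n *\<^sub>R x) = of_nat n *\<^sub>R g x" for n
  proof (induction n)
    case (Suc n)
    have "g (of_nat (Suc n) *\<^sub>R x) = g (of_nat n *\<^sub>R x + x)"
      by (simp add: algebra_simps)
    also have "\<dots> = g (of_nat n *\<^sub>R x) + g x"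
      using g assms additive_subgroup_scaleR_of_int[OF D assms, of "int n"]
      unfolding additive_on_def by simp
    finally show ?case using Suc by (simp add: algebra_simps)
  qed (simp add: additive_on_0)
  show ?thesis
  proof (cases k rule: int_cases2)
    case (nonpos n)
    have "of_nat n *\<^sub>R x \<in> D"
      using additive_subgroup_scaleR_of_int[OF D assms, of "int n"] by simp
    then show ?thesis using nonpos nat[of n] additive_on_minus by simp
  qed (simp add: nat)
qed

lemma additive_on_int_combination:
  assumes "v ` S \<subseteq> D"
  shows "g (\<Sum>i\<in>S. of_int (k i) *\<^sub>R v i) = (\<Sum>i\<in>S. of_int (k i) *\<^sub>R g (v i))"
  using assms
proof (induction S rule: infinite_finite_induct)
  case (insert i S)
  have "v i \<in> D" "(\<Sum>j\<in>S. of_int (k j) *\<^sub>R v j) \<in> D"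
    using insert additive_subgroup_int_combination[OF D] by auto
  then have "g (\<Sum>j\<in>insert i S. of_int (k j) *\<^sub>R v j)
      = g (of_int (k i) *\<^sub>R v i) + g (\<Sum>j\<in>S. of_int (k j) *\<^sub>R v j)"
    using g additive_subgroup_scaleR_of_int[OF D] insert(1,2)
    unfolding additive_on_def by simp
  then show ?case using insert \<open>v i \<in> D\<close> by (simp add: additive_on_scaleR_of_int)
qed (simp_all add: additive_on_0)

lemma additive_subgroup_image_additive_on: "additive_subgroup (g ` D)"
  unfolding additive_subgroup_def
proof (intro conjI ballI)
  show "0 \<in> g ` D"
    using additive_on_0 additive_subgroup_0[OF D] by force
next
  fix u v assume "u \<in> g ` D" "v \<in> g ` D"
  then obtain a b where "a \<in> D" "b \<in> D" "u + v = g (a + b)"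
    using g unfolding additive_on_def by auto
  then show "u + v \<in> g ` D"
    using additive_subgroup_add[OF D] by auto
next
  fix u assume "u \<in> g ` D"
  then obtain a where "a \<in> D" "- u = g (- a)"
    using additive_on_minus by auto
  then show "- u \<in> g ` D"
    using additive_subgroup_minus[OF D] by auto
qed

lemma additive_subgroup_vimage_additive_on:
  "additive_subgroup L \<Longrightarrow> additive_subgroup {x \<in> D. g x \<in> L}"
  using D g additive_on_0 additive_on_minus unfolding additive_subgroup_def additive_on_def
  by auto

end

section \<open>Discrete subgroups and integral independence\<close>

lemma uniform_discrete_if_discrete_additive_subgroup:
  fixes D :: "'a::real_normed_vector set"
  assumes "additive_subgroup D" "discrete D"
  shows "uniform_discrete D"
proof -
  have "0 isolated_in D"
    using discreteD[OF assms(2) additive_subgroup_0[OF assms(1)]] .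
  then obtain e where "e > 0" and e: "\<And>y. y \<in> D \<Longrightarrow> dist 0 y < e \<Longrightarrow> y = 0"
    by (rule isolated_inE_dist) blast
  have "x = y" if "x \<in> D" "y \<in> D" "dist x y < e" for x y
    using e[of "x - y"] that additive_subgroup_diff[OF assms(1)] by (simp add: dist_norm norm_minus_commute)
  then show ?thesis
    using \<open>e > 0\<close> by (auto simp: uniform_discrete_def)
qed

lemma Cauchy_uniform_discrete_eventually_const:
  assumes "uniform_discrete D" "Cauchy b" "\<And>n. b n \<in> D"
  shows "\<exists>d\<in>D. eventually (\<lambda>n. b n = d) sequentially"
proof -
  obtain e where "e > 0" and e: "\<And>x y. x \<in> D \<Longrightarrow> y \<in> D \<Longrightarrow> dist x y < e \<Longrightarrow> x = y"
    using assms(1) unfolding uniform_discrete_def by blast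
  then obtain N where N: "\<And>m n. m \<ge> N \<Longrightarrow> n \<ge> N \<Longrightarrow> dist (b m) (b n) < e"
    using assms(2) unfolding Cauchy_def by meson
  have "\<forall>n\<ge>N. b n = b N"
    using e[OF assms(3) assms(3) N] by blast
  then show ?thesis
    using assms(3) by (auto simp: eventually_sequentially)
qed

definition int_independent :: "'a::real_vector set \<Rightarrow> bool" where
  "int_independent B \<longleftrightarrow>
     (\<forall>k::'a \<Rightarrow> int. (\<Sum>v\<in>B. of_int (k v) *\<^sub>R v) = 0 \<longrightarrow> (\<forall>v\<in>B. k v = 0))"

lemma int_independentD:
  "int_independent B \<Longrightarrow> (\<Sum>v\<in>B. of_int (k v) *\<^sub>R v) = 0 \<Longrightarrow> v \<in> B \<Longrightarrow> k v = 0"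
  unfolding int_independent_def by blast

lemma int_independent_if_independent:
  fixes B :: "'a::euclidean_space set"
  assumes "independent B"
  shows "int_independent B"
  unfolding int_independent_def
proof (intro allI impI)
  fix k :: "'a \<Rightarrow> int" assume "(\<Sum>v\<in>B. of_int (k v) *\<^sub>R v) = 0"
  moreover have "\<forall>c. (\<Sum>v\<in>B. c v *\<^sub>R v) = 0 \<longrightarrow> (\<forall>v\<in>B. c v = 0)"
    using assms unfolding independent_explicit by blast
  ultimately show "\<forall>v\<in>B. k v = 0"
    by (metis of_int_eq_0_iff)
qed

text \<open>Rounding the multiples \<open>t c\<close> of a real dependence \<open>c\<close> gives integer combinations
  lying in a bounded part of \<open>D\<close>, which is finite. By integral independence the rounded
  coefficients of \<open>t c\<close> then take finitely many values as \<open>t\<close> ranges over \<open>\<nat>\<close>, so \<open>c = 0\<close>.\<close>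
lemma independent_if_int_independent:
  fixes D :: "'a::euclidean_space set"
  assumes "additive_subgroup D" "discrete D" "finite B" "B \<subseteq> D" "int_independent B"
  shows "independent B"
  unfolding independent_explicit
proof (intro conjI allI impI ballI \<open>finite B\<close>)
  fix c w assume sum0: "(\<Sum>v\<in>B. c v *\<^sub>R v) = 0" and "w \<in> B"
  show "c w = 0"
  proof (rule ccontr)
    assume "c w \<noteq> 0"
    define k where "k t v = round (real t * c v)" for t :: nat and v
    define P where "P t = (\<Sum>v\<in>B. of_int (k t v) *\<^sub>R v)" for t
    have P_in: "P t \<in> D \<inter> cball 0 (\<Sum>v\<in>B. norm v)" for t
    proof
      show "P t \<in> D"
        unfolding P_def using assms(1,4) by (intro additive_subgroup_int_combination) auto
      have "(\<Sum>v\<in>B. (real t * c v) *\<^sub>R v) = real t *\<^sub>R (\<Sum>v\<in>B. c v *\<^sub>R v)"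
        by (simp add: scaleR_sum_right)
      then have "P t = (\<Sum>v\<in>B. (of_int (k t v) - real t * c v) *\<^sub>R v)"
        using sum0 by (simp add: P_def scaleR_diff_left sum_subtractf)
      also have "norm \<dots> \<le> (\<Sum>v\<in>B. \<bar>of_int (k t v) - real t * c v\<bar> * norm v)"
        using norm_sum[of "\<lambda>v. (of_int (k t v) - real t * c v) *\<^sub>R v" B] by simp
      also have "\<dots> \<le> (\<Sum>v\<in>B. norm v)"
      proof (intro sum_mono mult_left_le_one_le)
        fix v
        show "\<bar>of_int (k t v) - real t * c v\<bar> \<le> 1"
          using of_int_round_abs_le[of "real t * c v"] unfolding k_def by linarith
      qed auto
      finally show "P t \<in> cball 0 (\<Sum>v\<in>B. norm v)"
        by simp
    qed
    then have "range P \<subseteq> D" "range P \<subseteq> cball 0 (\<Sum>v\<in>B. norm v)"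
      by auto
    then have "finite (range P)"
      using uniform_discrete_if_discrete_additive_subgroup[OF assms(1,2)]
      by (meson uniform_discrete_finite_iff uniform_discrete_subset bounded_subset bounded_cball)
    then obtain p where infinite: "infinite (P -` {p})"
      by (rule inf_img_fin_domE) auto
    then obtain t0 where "P t0 = p"
      using infinite_imp_nonempty by blast
    have k_eq: "k t w = k t0 w" if "P t = p" for t
    proof -
      have "(\<Sum>v\<in>B. of_int (k t v - k t0 v) *\<^sub>R v) = P t - P t0"
        by (simp add: P_def scaleR_diff_left sum_subtractf)
      then have "(\<Sum>v\<in>B. of_int (k t v - k t0 v) *\<^sub>R v) = 0"
        using \<open>P t0 = p\<close> that by simp
      from int_independentD[OF assms(5) this \<open>w \<in> B\<close>] show ?thesis
        by simp
    qed
    define M where "M = (\<bar>of_int (k t0 w)\<bar> + 1) / \<bar>c w\<bar>"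
    have t_le: "real t \<le> M" if "P t = p" for t
    proof -
      have "\<bar>of_int (k t0 w) - real t * c w\<bar> \<le> 1/2"
        using of_int_round_abs_le[of "real t * c w"] k_eq[OF that] unfolding k_def by simp
      then have "\<bar>real t * c w\<bar> \<le> \<bar>of_int (k t0 w)\<bar> + 1"
        by linarith
      then show ?thesis
        using \<open>c w \<noteq> 0\<close> by (simp add: M_def abs_mult field_simps)
    qed
    have "real t \<le> real (nat \<lceil>M\<rceil>)" if "P t = p" for t
      using order_trans[OF t_le[OF that] real_nat_ceiling_ge] .
    then have "P -` {p} \<subseteq> {..nat \<lceil>M\<rceil>}"
      by (auto simp del: of_nat_nat)
    then show False
      using infinite finite_subset by blast
  qed
qed

lemma card_le_dim_if_int_independent:
  fixes D :: "'a::euclidean_space set"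
  assumes "additive_subgroup D" "discrete D" "finite B" "B \<subseteq> D" "int_independent B"
  shows "card B \<le> dim D"
  using assms(4) independent_if_int_independent[OF assms] by (rule independent_card_le_dim)

lemma int_independent_image:
  fixes D :: "'a::euclidean_space set" and g :: "'a \<Rightarrow> 'b::euclidean_space"
  assumes "additive_subgroup D" "additive_on D g" "inj_on g D" "B \<subseteq> D" "int_independent B"
  shows "int_independent (g ` B)"
  unfolding int_independent_def
proof (intro allI impI ballI)
  fix k :: "'b \<Rightarrow> int" and w
  assume sum0: "(\<Sum>v\<in>g ` B. of_int (k v) *\<^sub>R v) = 0" and "w \<in> g ` B"
  have inj: "inj_on g B"
    using assms(3,4) by (rule inj_on_subset)
  have "g (\<Sum>b\<in>B. of_int (k (g b)) *\<^sub>R b) = (\<Sum>b\<in>B. of_int (k (g b)) *\<^sub>R g b)"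
    using assms(1,2,4) by (intro additive_on_int_combination) auto
  also have "\<dots> = g 0"
    using sum0 additive_on_0[OF assms(1,2)] by (simp add: sum.reindex[OF inj])
  finally have "g (\<Sum>b\<in>B. of_int (k (g b)) *\<^sub>R b) = g 0" .
  moreover have "(\<Sum>b\<in>B. of_int (k (g b)) *\<^sub>R b) \<in> D"
    using assms(1,4) by (intro additive_subgroup_int_combination) auto
  ultimately have "(\<Sum>b\<in>B. of_int (k (g b)) *\<^sub>R b) = 0"
    using inj_onD[OF assms(3)] additive_subgroup_0[OF assms(1)] by blast
  then show "k w = 0"
    using int_independentD[OF assms(5)] \<open>w \<in> g ` B\<close> by auto
qed

lemma int_independent_lift:
  fixes D :: "'a::euclidean_space set" and g :: "'a \<Rightarrow> 'b::euclidean_space"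
  assumes "additive_subgroup D" "additive_on D g" "h ` B \<subseteq> D" "\<And>b. b \<in> B \<Longrightarrow> g (h b) = b"
    and "int_independent B"
  shows "int_independent (h ` B)"
  unfolding int_independent_def
proof (intro allI impI ballI)
  fix k :: "'a \<Rightarrow> int" and w
  assume sum0: "(\<Sum>v\<in>h ` B. of_int (k v) *\<^sub>R v) = 0" and "w \<in> h ` B"
  have inj: "inj_on h B"
    using assms(4) by (rule inj_on_inverseI)
  have "(\<Sum>b\<in>B. of_int (k (h b)) *\<^sub>R b) = (\<Sum>b\<in>B. of_int (k (h b)) *\<^sub>R g (h b))"
    using assms(4) by simp
  also have "\<dots> = g (\<Sum>b\<in>B. of_int (k (h b)) *\<^sub>R h b)"
    using assms(1-3) by (intro additive_on_int_combination[symmetric]) auto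
  also have "\<dots> = 0"
    using sum0 additive_on_0[OF assms(1,2)] by (simp add: sum.reindex[OF inj])
  finally show "k w = 0"
    using int_independentD[OF assms(5)] \<open>w \<in> h ` B\<close> by auto
qed

lemma dim_le_if_inj_additive_on:
  fixes D :: "'a::euclidean_space set" and D' :: "'b::euclidean_space set"
  assumes "additive_subgroup D" "additive_on D g" "inj_on g D" "g ` D \<subseteq> D'"
    and "additive_subgroup D'" "discrete D'"
  shows "dim D \<le> dim D'"
proof -
  obtain B where B: "B \<subseteq> D" "independent B" "card B = dim D"
    by (metis basis_exists)
  have "int_independent (g ` B)"
    using assms(1-3) B(1) int_independent_if_independent[OF B(2)] by (rule int_independent_image)
  then have "card (g ` B) \<le> dim D'"
    using assms(4-6) B(1) independent_imp_finite[OF B(2)]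
    by (intro card_le_dim_if_int_independent) auto
  then show ?thesis
    using card_image[OF inj_on_subset[OF assms(3) B(1)]] B(3) by simp
qed

lemma dim_le_if_onto_additive_on:
  fixes D :: "'a::euclidean_space set" and D' :: "'b::euclidean_space set"
  assumes "additive_subgroup D" "discrete D" "additive_on D g" "D' \<subseteq> g ` D"
  shows "dim D' \<le> dim D"
proof -
  obtain B where B: "B \<subseteq> D'" "independent B" "card B = dim D'"
    by (metis basis_exists)
  have "\<forall>b\<in>B. \<exists>d. d \<in> D \<and> g d = b"
    using B(1) assms(4) by blast
  then obtain h where h: "\<And>b. b \<in> B \<Longrightarrow> h b \<in> D \<and> g (h b) = b"
    by metis
  have inj: "inj_on h B"
    using h by (intro inj_on_inverseI[of _ g]) auto
  have "int_independent (h ` B)"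
    using assms(1,3) h int_independent_if_independent[OF B(2)] by (intro int_independent_lift) auto
  then have "card (h ` B) \<le> dim D"
    using assms(1,2) h independent_imp_finite[OF B(2)]
    by (intro card_le_dim_if_int_independent) auto
  then show ?thesis
    using card_image[OF inj] B(3) by simp
qed

section \<open>Transversal subspaces\<close>

text \<open>The bound comes from minimising the distance to \<open>E\<close> over the unit sphere of \<open>F\<close>.\<close>
lemma transversal_subspaces_norm_bound:
  fixes E F :: "'a::euclidean_space set"
  assumes E: "subspace E" and F: "subspace F" and EF: "E \<inter> F = {0}"
  obtains \<delta> where "\<delta> > 0" "\<And>a b. a \<in> E \<Longrightarrow> b \<in> F \<Longrightarrow> \<delta> * norm b \<le> norm (a + b)"
proof (cases "F \<subseteq> {0}")
  case True
  then show ?thesis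
    using that[of 1] by force
next
  case False
  then obtain b1 where b1: "b1 \<in> F" "b1 \<noteq> 0"
    by auto
  define S where "S = F \<inter> sphere 0 1"
  have "b1 /\<^sub>R norm b1 \<in> S"
    unfolding S_def using b1 by (simp add: subspace_scale[OF F])
  have "compact S"
    unfolding S_def by (intro closed_Int_compact closed_subspace F compact_sphere)
  moreover have "S \<noteq> {}"
    using \<open>b1 /\<^sub>R norm b1 \<in> S\<close> by blast
  moreover have "continuous_on S (\<lambda>x. infdist x E)"
    by (intro continuous_intros)
  ultimately have "\<exists>x\<in>S. \<forall>u\<in>S. infdist x E \<le> infdist u E"
    by (rule continuous_attains_inf)
  then obtain b0 where b0: "b0 \<in> S" and min: "\<And>u. u \<in> S \<Longrightarrow> infdist b0 E \<le> infdist u E"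
    by blast
  have "b0 \<in> F" "b0 \<noteq> 0"
    using b0 unfolding S_def by auto
  then have "b0 \<notin> E"
    using EF by blast
  then have pos: "infdist b0 E > 0"
    using infdist_pos_not_in_closed[OF closed_subspace[OF E]] subspace_0[OF E] by auto
  have "infdist b0 E * norm b \<le> norm (a + b)" if a: "a \<in> E" and b: "b \<in> F" for a b
  proof (cases "b = 0")
    case False
    have "b /\<^sub>R norm b \<in> S"
      unfolding S_def using False b by (simp add: subspace_scale[OF F])
    moreover have "- (a /\<^sub>R norm b) \<in> E"
      using a E by (simp add: subspace_neg subspace_scale)
    ultimately have "infdist b0 E \<le> dist (b /\<^sub>R norm b) (- (a /\<^sub>R norm b))"
      using min infdist_le by (meson order_trans)
    also have "\<dots> = norm (b + a) / norm b"
      by (simp add: dist_norm divide_inverse_commute flip: scaleR_right_distrib)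
    finally show ?thesis
      using False by (simp add: field_simps)
  qed simp
  with pos show ?thesis
    by (rule that)
qed

lemma Cauchy_transversal_component:
  fixes a b :: "nat \<Rightarrow> 'a::euclidean_space"
  assumes E: "subspace E" and F: "subspace F" and EF: "E \<inter> F = {0}"
    and "\<And>n. a n \<in> E" "\<And>n. b n \<in> F" "Cauchy (\<lambda>n. a n + b n)"
  shows "Cauchy b"
proof (rule CauchyI)
  fix \<epsilon> :: real assume "\<epsilon> > 0"
  obtain \<delta> where "\<delta> > 0" and \<delta>: "\<And>a b. a \<in> E \<Longrightarrow> b \<in> F \<Longrightarrow> \<delta> * norm b \<le> norm (a + b)"
    using transversal_subspaces_norm_bound[OF E F EF] by blast
  then obtain M where M: "\<And>m n. m \<ge> M \<Longrightarrow> n \<ge> M \<Longrightarrow> dist (a m + b m) (a n + b n) < \<delta> * \<epsilon>"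
    using assms(6) \<open>\<epsilon> > 0\<close> unfolding Cauchy_def by (meson mult_pos_pos)
  have "norm (b m - b n) < \<epsilon>" if "m \<ge> M" "n \<ge> M" for m n
  proof -
    have "\<delta> * norm (b m - b n) \<le> norm ((a m - a n) + (b m - b n))"
      using assms(4,5) by (intro \<delta> subspace_diff E F)
    also have "\<dots> < \<delta> * \<epsilon>"
      using M[OF that] by (simp add: dist_norm algebra_simps)
    finally show ?thesis
      using \<open>\<delta> > 0\<close> by simp
  qed
  then show "\<exists>M. \<forall>m\<ge>M. \<forall>n\<ge>M. norm (b m - b n) < \<epsilon>"
    by blast
qed

lemma transversal_limit_discrete_component:
  fixes a b :: "nat \<Rightarrow> 'a::euclidean_space"
  assumes E: "subspace E" and F: "subspace F" and EF: "E \<inter> F = {0}"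
    and L: "uniform_discrete L" "L \<subseteq> F"
    and ab: "\<And>n. a n \<in> E" "\<And>n. b n \<in> L" and lim: "(\<lambda>n. a n + b n) \<longlonglongrightarrow> z"
  shows "\<exists>d\<in>L. eventually (\<lambda>n. b n = d) sequentially \<and> a \<longlonglongrightarrow> z - d"
proof -
  have "b n \<in> F" for n
    using ab(2) L(2) by blast
  then have "Cauchy b"
    using Cauchy_transversal_component[OF E F EF ab(1) _ LIMSEQ_imp_Cauchy[OF lim]] by blast
  then obtain d where "d \<in> L" and ev: "eventually (\<lambda>n. b n = d) sequentially"
    using Cauchy_uniform_discrete_eventually_const[OF L(1) \<open>Cauchy b\<close> ab(2)] by blast
  have "(\<lambda>n. (a n + b n) - d) \<longlonglongrightarrow> z - d"
    by (intro tendsto_diff lim tendsto_const)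
  moreover have "eventually (\<lambda>n. (a n + b n) - d = a n) sequentially"
    using ev by (rule eventually_mono) simp
  ultimately have "a \<longlonglongrightarrow> z - d"
    by (rule Lim_transform_eventually)
  then show ?thesis
    using \<open>d \<in> L\<close> ev by blast
qed

lemma closed_sums_transversal_uniform_discrete:
  fixes E F L :: "'a::euclidean_space set"
  assumes E: "subspace E" and F: "subspace F" and EF: "E \<inter> F = {0}"
    and L: "uniform_discrete L" "L \<subseteq> F"
  shows "closed {x + y | x y. x \<in> E \<and> y \<in> L}"
  unfolding closed_sequential_limits
proof (intro allI impI, elim conjE)
  fix s z assume s: "\<forall>n. s n \<in> {x + y | x y. x \<in> E \<and> y \<in> L}" and lim: "s \<longlonglongrightarrow> z"
  then obtain a b where ab: "\<And>n. a n \<in> E" "\<And>n. b n \<in> L" "\<And>n. s n = a n + b n"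
    by simp metis
  have "s = (\<lambda>n. a n + b n)"
    using ab(3) by blast
  with lim have "(\<lambda>n. a n + b n) \<longlonglongrightarrow> z"
    by simp
  then obtain d where "d \<in> L" "a \<longlonglongrightarrow> z - d"
    using transversal_limit_discrete_component[where a = a and b = b, OF E F EF L ab(1,2)] by blast
  then have "z - d \<in> E"
    using closed_sequentially[OF closed_subspace[OF E]] ab(1) by blast
  then show "z \<in> {x + y | x y. x \<in> E \<and> y \<in> L}"
    using \<open>d \<in> L\<close> by force
qed

section \<open>Decompositions of closed subgroups\<close>

lemma closed_group_decompD:
  assumes "closed_group_decomp H E D"
  shows "subspace E" "additive_subgroup D" "discrete D" "E \<inter> span D = {0}"
    and "H = {x + y | x y. x \<in> E \<and> y \<in> D}"
  using assms unfolding closed_group_decomp_def by auto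

lemma closed_group_decomp_subset:
  assumes "closed_group_decomp H E D"
  shows "E \<subseteq> H" "D \<subseteq> H"
proof -
  note dec = closed_group_decompD[OF assms]
  have "x + 0 \<in> H" "0 + y \<in> H" if "x \<in> E" "y \<in> D" for x y
    unfolding dec(5) using that additive_subgroup_0[OF dec(2)] subspace_0[OF dec(1)] by blast+
  then show "E \<subseteq> H" "D \<subseteq> H"
    using additive_subgroup_0[OF dec(2)] subspace_0[OF dec(1)] by auto
qed

lemma direct_sum_components_unique:
  assumes "subspace E" "subspace F" "E \<inter> F = {0}"
    and "x \<in> E" "x' \<in> E" "y \<in> F" "y' \<in> F" "x + y = x' + y'"
  shows "x = x'" "y = y'"
proof -
  have "x - x' \<in> E"
    using assms(1,4,5) by (rule subspace_diff)
  moreover have "x - x' = y' - y"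
    using assms(8) by (simp add: algebra_simps)
  then have "x - x' \<in> F"
    using subspace_diff[OF assms(2,7,6)] by simp
  ultimately have "x - x' = 0"
    using assms(3) by blast
  then show "x = x'" "y = y'"
    using assms(8) by simp_all
qed

lemma subspace_subset_closed_group_decomp:
  fixes H :: "'a::euclidean_space set"
  assumes "closed_group_decomp H E D" and V: "subspace V" "V \<subseteq> H"
  shows "V \<subseteq> E"
proof
  note dec = closed_group_decompD[OF assms(1)]
  obtain e where "e > 0" and e: "\<And>x y. x \<in> D \<Longrightarrow> y \<in> D \<Longrightarrow> dist x y < e \<Longrightarrow> x = y"
    using uniform_discrete_if_discrete_additive_subgroup[OF dec(2,3)]
    unfolding uniform_discrete_def by blast
  fix v assume "v \<in> V"
  then obtain x y where xy: "x \<in> E" "y \<in> D" "v = x + y"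
    using V dec(5) by auto
  txt \<open>By uniqueness of decompositions, \<open>t y\<close> is the \<open>D\<close>-component of \<open>t v \<in> V\<close>.\<close>
  have scaled: "t *\<^sub>R y \<in> D" for t
  proof -
    have "t *\<^sub>R v \<in> H"
      using V \<open>v \<in> V\<close> by (auto simp: subspace_scale)
    then obtain x' y' where "x' \<in> E" "y' \<in> D" "t *\<^sub>R x + t *\<^sub>R y = x' + y'"
      using dec(5) xy(3) by (auto simp: scaleR_right_distrib)
    moreover have "t *\<^sub>R x \<in> E" "t *\<^sub>R y \<in> span D"
      using xy dec(1) by (simp_all add: subspace_scale span_base span_scale)
    ultimately have "t *\<^sub>R y = y'"
      using direct_sum_components_unique(2)[OF dec(1) subspace_span dec(4)] span_base by blast
    then show ?thesis
      using \<open>y' \<in> D\<close> by simp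
  qed
  have "y = 0"
  proof (rule ccontr)
    assume "y \<noteq> 0"
    define t where "t = e / (2 * norm y)"
    have "dist (t *\<^sub>R y) 0 < e"
      using \<open>y \<noteq> 0\<close> \<open>e > 0\<close> by (simp add: t_def)
    then have "t *\<^sub>R y = 0"
      by (rule e[OF scaled additive_subgroup_0[OF dec(2)]])
    then show False
      using \<open>y \<noteq> 0\<close> \<open>e > 0\<close> by (simp add: t_def)
  qed
  then show "v \<in> E"
    using xy by simp
qed

lemma span_closed_group_decomp:
  fixes H :: "'a::euclidean_space set"
  assumes "closed_group_decomp H E D"
  shows "span H = {x + y | x y. x \<in> E \<and> y \<in> span D}"
proof (rule span_subspace)
  note dec = closed_group_decompD[OF assms]
  show "H \<subseteq> {x + y | x y. x \<in> E \<and> y \<in> span D}"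
    using dec(5) span_base by fastforce
  show "subspace {x + y | x y. x \<in> E \<and> y \<in> span D}"
    by (rule subspace_sums[OF dec(1) subspace_span])
  show "{x + y | x y. x \<in> E \<and> y \<in> span D} \<subseteq> span H"
  proof clarify
    fix x y assume "x \<in> E" "y \<in> span D"
    then have "x \<in> span H" "y \<in> span H"
      using closed_group_decomp_subset[OF assms] span_base span_mono by blast+
    then show "x + y \<in> span H"
      by (rule span_add)
  qed
qed

lemma tdim_closed_group_decomp:
  fixes H :: "'a::euclidean_space set"
  assumes "closed_group_decomp H E D"
  shows "tdim H = Complex (dim E) (dim D)"
proof -
  note dec = closed_group_decompD[OF assms]
  let ?S = "{dim V | V. subspace V \<and> V \<subseteq> H}"
  have le: "n \<le> dim E" if n: "n \<in> ?S" for n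
  proof -
    obtain V where "n = dim V" "subspace V" "V \<subseteq> H"
      using n by blast
    then show ?thesis
      using dim_subset[OF subspace_subset_closed_group_decomp[OF assms]] by simp
  qed
  have "Max ?S = dim E"
  proof (rule Max_eqI)
    have "?S \<subseteq> {..dim E}"
      using le by blast
    then show "finite ?S"
      using finite_subset by blast
    show "dim E \<in> ?S"
      using dec(1) closed_group_decomp_subset(1)[OF assms] by auto
    show "n \<le> dim E" if "n \<in> ?S" for n
      using le[OF that] .
  qed
  moreover have "dim (span H) = dim E + dim D"
    using dim_sums_Int[OF dec(1) subspace_span, of D] dec(4)
    by (simp add: span_closed_group_decomp[OF assms])
  ultimately show ?thesis
    unfolding tdim_def Let_def by simp
qed

lemma linear_extension_of_linear_on_subspace:
  fixes g :: "'a::euclidean_space \<Rightarrow> 'b::real_vector"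
  assumes E: "subspace E" and add: "\<And>x y. x \<in> E \<Longrightarrow> y \<in> E \<Longrightarrow> g (x + y) = g x + g y"
    and scale: "\<And>c x. x \<in> E \<Longrightarrow> g (c *\<^sub>R x) = c *\<^sub>R g x"
  obtains g' where "linear g'" "\<And>x. x \<in> E \<Longrightarrow> g' x = g x"
proof -
  obtain B where B: "B \<subseteq> E" "independent B" "E \<subseteq> span B"
    by (metis basis_exists)
  obtain g' where g': "linear g'" "\<And>x. x \<in> B \<Longrightarrow> g' x = g x"
    using linear_independent_extend[OF B(2)] by blast
  have "g 0 = 0"
    using scale[of 0 0] subspace_0[OF E] by simp
  then have "subspace {x \<in> E. g' x = g x}"
    unfolding subspace_def using E add scale g'(1)
    by (auto simp: linear_add linear_scale linear_0 subspace_add subspace_scale subspace_0)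
  then have "x \<in> {x \<in> E. g' x = g x}" if "x \<in> E" for x
    using span_subspace_induct[of x B] that B(1,3) g'(2) by blast
  then show ?thesis
    using that g'(1) by blast
qed

lemma cmod_Complex_mono:
  assumes "0 \<le> a" "a \<le> a'" "0 \<le> b" "b \<le> b'"
  shows "cmod (Complex a b) \<le> cmod (Complex a' b')"
proof -
  have "a\<^sup>2 + b\<^sup>2 \<le> a'\<^sup>2 + b'\<^sup>2"
    using assms by (intro add_mono power_mono) auto
  then show ?thesis
    by (simp add: cmod_def)
qed

section \<open>Homomorphisms of closed groups\<close>

text \<open>Here \<open>f1\<close> is linear on the whole space, not just on \<open>E\<close> as in \<open>closed_group_hom\<close>,
  which makes it continuous.\<close>
locale closed_group_hom_split =
  fixes H E D K E' D' :: "'a::euclidean_space set" and f f1 f2 :: "'a \<Rightarrow> 'a"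
  assumes decomp_H: "closed_group_decomp H E D"
    and decomp_K: "closed_group_decomp K E' D'"
    and linear_f1: "linear f1" and f1_image: "f1 ` E \<subseteq> E'"
    and f2_image: "f2 ` D \<subseteq> D'" and additive_f2: "additive_on D f2"
    and f_split: "\<And>x y. x \<in> E \<Longrightarrow> y \<in> D \<Longrightarrow> f (x + y) = f1 x + f2 y"
begin

lemmas H = closed_group_decompD[OF decomp_H]
lemmas K = closed_group_decompD[OF decomp_K]

lemma f_on_E: "x \<in> E \<Longrightarrow> f x = f1 x"
  using f_split[of x 0] additive_subgroup_0[OF H(2)] additive_on_0[OF H(2) additive_f2] by simp

lemma f_on_D: "y \<in> D \<Longrightarrow> f y = f2 y"
  using f_split[of 0 y] subspace_0[OF H(1)] linear_0[OF linear_f1] by simp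

lemma additive_on_f: "additive_on H f"
  unfolding additive_on_def
proof (intro ballI)
  fix u v assume "u \<in> H" "v \<in> H"
  then obtain x y x' y' where xy: "x \<in> E" "y \<in> D" "x' \<in> E" "y' \<in> D" "u = x + y" "v = x' + y'"
    using H(5) by blast
  then have "f (u + v) = f ((x + x') + (y + y'))"
    by (simp add: algebra_simps)
  also have "\<dots> = f1 (x + x') + f2 (y + y')"
    using xy H(1) additive_subgroup_add[OF H(2)] by (simp add: f_split subspace_add)
  also have "\<dots> = (f1 x + f2 y) + (f1 x' + f2 y')"
    using xy additive_f2 linear_add[OF linear_f1] by (simp add: additive_on_def algebra_simps)
  finally show "f (u + v) = f u + f v"
    using xy by (simp add: f_split)
qed

lemma image_eq: "f ` H = {x + y | x y. x \<in> f1 ` E \<and> y \<in> f2 ` D}"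
proof
  show "f ` H \<subseteq> {x + y | x y. x \<in> f1 ` E \<and> y \<in> f2 ` D}"
  proof
    fix z assume "z \<in> f ` H"
    then obtain x y where "x \<in> E" "y \<in> D" "z = f (x + y)"
      using H(5) by blast
    then show "z \<in> {x + y | x y. x \<in> f1 ` E \<and> y \<in> f2 ` D}"
      using f_split by blast
  qed
  show "{x + y | x y. x \<in> f1 ` E \<and> y \<in> f2 ` D} \<subseteq> f ` H"
  proof clarify
    fix x y assume "x \<in> E" "y \<in> D"
    then have "x + y \<in> H" "f1 x + f2 y = f (x + y)"
      using H(5) f_split[OF \<open>x \<in> E\<close> \<open>y \<in> D\<close>] by auto
    then show "f1 x + f2 y \<in> f ` H"
      by simp
  qed
qed

lemma image_subset: "f ` H \<subseteq> K"
  unfolding image_eq K(5) using f1_image f2_image by blast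

lemma closed_image: "closed (f ` H)"
proof -
  have "uniform_discrete (f2 ` D)"
    using uniform_discrete_if_discrete_additive_subgroup[OF K(2,3)] f2_image
    by (rule uniform_discrete_subset)
  moreover have "f1 ` E \<inter> span D' = {0}"
  proof
    show "f1 ` E \<inter> span D' \<subseteq> {0}"
      using K(4) f1_image by blast
    show "{0} \<subseteq> f1 ` E \<inter> span D'"
      using linear_0[OF linear_f1] subspace_0[OF H(1)] span_zero by force
  qed
  ultimately show ?thesis
    unfolding image_eq
    using closed_sums_transversal_uniform_discrete[OF linear_subspace_image[OF linear_f1 H(1)]
        subspace_span] subset_trans[OF f2_image span_superset]
    by blast
qed

lemma continuous_on_f: "continuous_on H f"
proof (rule continuous_on_sequentiallyI)
  fix u z assume "\<forall>n. u n \<in> H" "z \<in> H" "u \<longlonglongrightarrow> z"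
  then obtain a b where ab: "\<And>n. a n \<in> E" "\<And>n. b n \<in> D" "\<And>n. u n = a n + b n"
    unfolding H(5) by simp metis
  have "u = (\<lambda>n. a n + b n)"
    using ab(3) by blast
  with \<open>u \<longlonglongrightarrow> z\<close> have "(\<lambda>n. a n + b n) \<longlonglongrightarrow> z"
    by simp
  then obtain d where "d \<in> D" and ev: "eventually (\<lambda>n. b n = d) sequentially"
    and a: "a \<longlonglongrightarrow> z - d"
    using transversal_limit_discrete_component[where a = a and b = b, OF H(1) subspace_span H(4)
        uniform_discrete_if_discrete_additive_subgroup[OF H(2,3)] span_superset ab(1,2)]
    by blast
  have "z - d \<in> E"
    using closed_sequentially[OF closed_subspace[OF H(1)]] ab(1) a by blast
  have "(\<lambda>n. f1 (a n) + f2 d) \<longlonglongrightarrow> f1 (z - d) + f2 d"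
    using bounded_linear.tendsto[OF linear_f1[unfolded linear_conv_bounded_linear] a]
    by (rule tendsto_add) simp
  moreover have "f1 (z - d) + f2 d = f z"
    using f_split[OF \<open>z - d \<in> E\<close> \<open>d \<in> D\<close>] by simp
  moreover have "eventually (\<lambda>n. f1 (a n) + f2 d = f (u n)) sequentially"
    using ev by (rule eventually_mono) (simp add: ab(3) f_split[OF ab(1) \<open>d \<in> D\<close>])
  ultimately show "(\<lambda>n. f (u n)) \<longlonglongrightarrow> f z"
    using Lim_transform_eventually by fastforce
qed

lemma dims_le_if_inj:
  assumes "inj_on f H"
  shows "dim E \<le> dim E'" "dim D \<le> dim D'"
proof -
  have "span E = E"
    using H(1) span_eq_iff by blast
  moreover have "inj_on f1 E"
    using inj_on_subset[OF assms closed_group_decomp_subset(1)[OF decomp_H]]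
      inj_on_cong[of E f f1] f_on_E by simp
  ultimately have "inj_on f1 (span E)"
    by (simp only:)
  then have "dim E = dim (f1 ` E)"
    using dim_image_eq[OF linear_f1] by simp
  also have "\<dots> \<le> dim E'"
    using f1_image by (rule dim_subset)
  finally show "dim E \<le> dim E'" .
  have "inj_on f2 D"
    using inj_on_subset[OF assms closed_group_decomp_subset(2)[OF decomp_H]]
      inj_on_cong[of D f f2] f_on_D by simp
  then show "dim D \<le> dim D'"
    using dim_le_if_inj_additive_on[OF H(2) additive_f2 _ f2_image K(2,3)] by blast
qed

lemma components_onto_if_surj:
  assumes "f ` H = K"
  shows "E' \<subseteq> f1 ` E" "D' \<subseteq> f2 ` D"
proof -
  have split: "x' \<in> f1 ` E \<and> y' \<in> f2 ` D" if "x' \<in> E'" "y' \<in> D'" for x' y'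
  proof -
    have "x' + y' \<in> K"
      using that K(5) by blast
    then obtain x y where "x \<in> E" "y \<in> D" "x' + y' = f1 x + f2 y"
      using assms image_eq by auto
    moreover have "f1 x \<in> E'" "f2 y \<in> span D'" "y' \<in> span D'"
      using \<open>x \<in> E\<close> \<open>y \<in> D\<close> \<open>y' \<in> D'\<close> f1_image f2_image span_base by blast+
    ultimately show ?thesis
      using direct_sum_components_unique[OF K(1) subspace_span K(4) \<open>x' \<in> E'\<close>] by blast
  qed
  show "E' \<subseteq> f1 ` E"
    using split additive_subgroup_0[OF K(2)] by blast
  show "D' \<subseteq> f2 ` D"
    using split subspace_0[OF K(1)] by blast
qed

lemma dims_le_if_surj:
  assumes "f ` H = K"
  shows "dim E' \<le> dim E" "dim D' \<le> dim D"
proof -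
  have "dim E' \<le> dim (f1 ` E)"
    using components_onto_if_surj(1)[OF assms] by (rule dim_subset)
  also have "\<dots> \<le> dim E"
    using linear_f1 by (rule dim_image_le)
  finally show "dim E' \<le> dim E" .
  show "dim D' \<le> dim D"
    using dim_le_if_onto_additive_on[OF H(2,3) additive_f2 components_onto_if_surj(2)[OF assms]] .
qed

lemma cmod_tdim_le_if_inj: "inj_on f H \<Longrightarrow> cmod (tdim H) \<le> cmod (tdim K)"
  unfolding tdim_closed_group_decomp[OF decomp_H] tdim_closed_group_decomp[OF decomp_K]
  using dims_le_if_inj by (intro cmod_Complex_mono) auto

lemma cmod_tdim_le_if_surj: "f ` H = K \<Longrightarrow> cmod (tdim K) \<le> cmod (tdim H)"
  unfolding tdim_closed_group_decomp[OF decomp_H] tdim_closed_group_decomp[OF decomp_K]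
  using dims_le_if_surj by (intro cmod_Complex_mono) auto

lemma tdim_eq_if_bij: "bij_betw f H K \<Longrightarrow> tdim H = tdim K"
  unfolding tdim_closed_group_decomp[OF decomp_H] tdim_closed_group_decomp[OF decomp_K]
  using dims_le_if_inj dims_le_if_surj by (simp add: bij_betw_def le_antisym)

lemma closed_additive_subgroup_image:
  "additive_subgroup H \<Longrightarrow> closed_additive_subgroup (f ` H)"
  unfolding closed_additive_subgroup_def
  using closed_image additive_subgroup_image_additive_on additive_on_f by blast

lemma closed_additive_subgroup_preimage:
  assumes "closed_additive_subgroup H" "closed_additive_subgroup L"
  shows "closed_additive_subgroup {x \<in> H. f x \<in> L}"
proof -
  have "{x \<in> H. f x \<in> L} = H \<inter> f -` L"
    by blast
  moreover have "closed (H \<inter> f -` L)"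
    using continuous_on_f assms unfolding closed_additive_subgroup_def
    by (blast intro: continuous_closed_preimage)
  moreover have "additive_subgroup {x \<in> H. f x \<in> L}"
    using assms additive_subgroup_vimage_additive_on additive_on_f
    unfolding closed_additive_subgroup_def by blast
  ultimately show ?thesis
    unfolding closed_additive_subgroup_def by simp
qed

end

lemma closed_group_hom_split_exists:
  assumes "closed_group_decomp H E D" "closed_group_decomp K E' D'" "closed_group_hom E D E' D' f"
  shows "\<exists>f1 f2. closed_group_hom_split H E D K E' D' f f1 f2"
proof -
  obtain g f2 where g: "g ` E \<subseteq> E'" "\<And>x y. x \<in> E \<Longrightarrow> y \<in> E \<Longrightarrow> g (x + y) = g x + g y"
      "\<And>c x. x \<in> E \<Longrightarrow> g (c *\<^sub>R x) = c *\<^sub>R g x"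
    and f2: "f2 ` D \<subseteq> D'" "additive_on D f2"
    and split: "\<And>x y. x \<in> E \<Longrightarrow> y \<in> D \<Longrightarrow> f (x + y) = g x + f2 y"
    using assms(3) unfolding closed_group_hom_def additive_on_def by metis
  obtain f1 where "linear f1" "\<And>x. x \<in> E \<Longrightarrow> f1 x = g x"
    using linear_extension_of_linear_on_subspace[OF closed_group_decompD(1)[OF assms(1)] g(2,3)] by blast
  then have "closed_group_hom_split H E D K E' D' f f1 f2"
    using assms(1,2) g(1) f2 split unfolding closed_group_hom_split_def by auto
  then show ?thesis
    by blast
qed

theorem theorem1p8:
  fixes H K E D E' D' :: "(real ^ 'n) set" and f :: "real ^ 'n \<Rightarrow> real ^ 'n"
  assumes "closed_additive_subgroup H" and "closed_additive_subgroup K"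
    and "closed_group_decomp H E D" and "closed_group_decomp K E' D'"
    and "closed_group_hom E D E' D' f"
  shows "(inj_on f H \<longrightarrow> cmod (tdim H) \<le> cmod (tdim K))
       \<and> (f ` H = K \<longrightarrow> cmod (tdim H) \<ge> cmod (tdim K))
       \<and> (bij_betw f H K \<longrightarrow> tdim H = tdim K)
       \<and> (f ` H \<subseteq> K \<and> closed_additive_subgroup (f ` H))
       \<and> (\<forall>L. L \<subseteq> K \<and> closed_additive_subgroup L \<longrightarrow>
             closed_additive_subgroup {x \<in> H. f x \<in> L} \<and> {x \<in> H. f x \<in> L} \<subseteq> H)"
proof -
  obtain f1 f2 where "closed_group_hom_split H E D K E' D' f f1 f2"
    using closed_group_hom_split_exists[OF assms(3-5)] by blast
  then interpret closed_group_hom_split H E D K E' D' f f1 f2 .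
  show ?thesis
    using cmod_tdim_le_if_inj cmod_tdim_le_if_surj tdim_eq_if_bij image_subset
      closed_additive_subgroup_image closed_additive_subgroup_preimage assms(1)
    unfolding closed_additive_subgroup_def by blast
qed

end
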